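(* Let $\mathfrak g$ be simple, $\alpha\in\Pi\cap\Delta_s$ a short simple root, and $\lambda\in\mathfrak X_+\cap Q$. Let $\alpha^+=\theta_s$ denote the unique dominant element of $W\alpha$. Then $q\,\mathfrak m_\lambda^\alpha(q)=q^{\mathrm{ht}(\alpha^+)}\,\mathfrak m_\lambda^{\alpha^+}(q)$, and consequently $\mathfrak m_\lambda^0(q)-q^{\mathrm{ht}(\alpha^+)}\mathfrak m_\lambda^{\alpha^+}(q)=\mathfrak m_\lambda^0(q)-q\,\mathfrak m_\lambda^{\alpha}(q)=q\,\mathfrak m_\lambda^0(q)-\mathfrak m_\lambda^{-\alpha}(q)$.
   Context: Let $\mathfrak g$ be a semisimple Lie algebra over an algebraically closed field of characteristic zero, with Cartan subalgebra $\mathfrak t$, root system $\Delta$, positive roots $\Delta^+$, simple roots $\Pi=\{\alpha_1,\dots,\alpha_r\}$, $\rho=\frac12\sum_{\gamma\in\Delta^+}\gamma$, integral weight lattice $\mathfrak X$, dominant weights $\mathfrak X_+$, root lattice $Q$, and $Q_+$ the monoid generated by $\Pi$. The Weyl group is $W$, with length function $\ell$ and sign $\varepsilon(w)=(-1)^{\ell(w)}$. For $\gamma=\sum_i c_i\alpha_i\in Q$, $\mathrm{ht}(\gamma)=\sum_i c_i$. Define polynomials $\mathcal P_q(\mu)\in\mathbb Z[q]$ by $\prod_{\alpha\in\Delta^+}(1-qe^{\alpha})^{-1}=\sum_{\mu\in Q_+}\mathcal P_q(\mu)e^\mu$, and $\mathcal P_q(\mu)=0$ for $\mu\notin Q_+$.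 For $\lambda\in\mathfrak X_+$ and any $\mu\in\mathfrak X$, Lusztig's $q$-analogue of weight multiplicity is $\mathfrak m_\lambda^\mu(q)=\sum_{w\in W}\varepsilon(w)\mathcal P_q(w(\lambda+\rho)-(\mu+\rho))$. $\Delta_s$ is the set of short roots (all roots if $\mathfrak g$ is simply-laced) and $\theta_s$ the dominant short root. *)

theory Defs
  imports "HOL-Analysis.Analysis" "HOL-Computational_Algebra.Polynomial"
begin

text \<open>Root-system data of a semisimple Lie algebra, realised in a real Euclidean
  space (the real form of the dual of the Cartan subalgebra).\<close>

definition refl :: "'a::euclidean_space \<Rightarrow> 'a \<Rightarrow> 'a" where
  "refl a x = x - (2 * (x \<bullet> a) / (a \<bullet> a)) *\<^sub>R a"

definition root_system :: "'a::euclidean_space set \<Rightarrow> bool" where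
  "root_system R \<longleftrightarrow> finite R \<and> 0 \<notin> R \<and> span R = UNIV
     \<and> (\<forall>a\<in>R. refl a ` R = R)
     \<and> (\<forall>a\<in>R. \<forall>b\<in>R. 2 * (b \<bullet> a) / (a \<bullet> a) \<in> \<int>)
     \<and> (\<forall>a\<in>R. \<forall>c::real. c *\<^sub>R a \<in> R \<longrightarrow> c = 1 \<or> c = -1)"

text \<open>Irreducible root system (= root system of a simple Lie algebra).\<close>
definition irreducible_rs :: "'a::euclidean_space set \<Rightarrow> bool" where
  "irreducible_rs R \<longleftrightarrow> R \<noteq> {} \<and>
     \<not> (\<exists>R1 R2. R1 \<noteq> {} \<and> R2 \<noteq> {} \<and> R1 \<union> R2 = R \<and> R1 \<inter> R2 = {}
            \<and> (\<forall>a\<in>R1. \<forall>b\<in>R2. a \<bullet> b = 0))"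

definition is_base :: "'a::euclidean_space set \<Rightarrow> 'a set \<Rightarrow> bool" where
  "is_base R S \<longleftrightarrow> S \<subseteq> R \<and> independent S \<and>
     (\<forall>b\<in>R. \<exists>c::'a \<Rightarrow> int. b = (\<Sum>s\<in>S. of_int (c s) *\<^sub>R s)
        \<and> ((\<forall>s\<in>S. c s \<ge> 0) \<or> (\<forall>s\<in>S. c s \<le> 0)))"

definition Qplus :: "'a::euclidean_space set \<Rightarrow> 'a set" where
  "Qplus S = {\<Sum>s\<in>S. of_nat (c s) *\<^sub>R s | c :: 'a \<Rightarrow> nat. True}"

definition pos_roots :: "'a::euclidean_space set \<Rightarrow> 'a set \<Rightarrow> 'a set" where
  "pos_roots R S = R \<inter> Qplus S"

definition root_lattice :: "'a::euclidean_space set \<Rightarrow> 'a set" where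
  "root_lattice R = {\<Sum>b\<in>R. of_int (c b) *\<^sub>R b | c :: 'a \<Rightarrow> int. True}"

definition ht :: "'a::euclidean_space set \<Rightarrow> 'a \<Rightarrow> int" where
  "ht S \<gamma> = (THE n. \<exists>c :: 'a \<Rightarrow> int. \<gamma> = (\<Sum>s\<in>S. of_int (c s) *\<^sub>R s) \<and> n = (\<Sum>s\<in>S. c s))"

definition weights :: "'a::euclidean_space set \<Rightarrow> 'a set" where
  "weights R = {x. \<forall>b\<in>R. 2 * (x \<bullet> b) / (b \<bullet> b) \<in> \<int>}"

definition dominant :: "'a::euclidean_space set \<Rightarrow> 'a set \<Rightarrow> 'a set" where
  "dominant R S = {x \<in> weights R. \<forall>s\<in>S. x \<bullet> s \<ge> 0}"

definition rho :: "'a::euclidean_space set \<Rightarrow> 'a set \<Rightarrow> 'a" where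
  "rho R S = (1/2) *\<^sub>R (\<Sum>b\<in>pos_roots R S. b)"

inductive_set weyl :: "'a::euclidean_space set \<Rightarrow> ('a \<Rightarrow> 'a) set" for R where
  weyl_id: "id \<in> weyl R"
| weyl_step: "w \<in> weyl R \<Longrightarrow> a \<in> R \<Longrightarrow> refl a \<circ> w \<in> weyl R"

definition wlen :: "'a::euclidean_space set \<Rightarrow> ('a \<Rightarrow> 'a) \<Rightarrow> nat" where
  "wlen S w = (LEAST n. \<exists>xs. set xs \<subseteq> S \<and> length xs = n \<and> w = foldr (\<lambda>a f. refl a \<circ> f) xs id)"

definition wsign :: "'a::euclidean_space set \<Rightarrow> ('a \<Rightarrow> 'a) \<Rightarrow> int" where
  "wsign S w = (-1) ^ wlen S w"

text \<open>Kostant q-partition function: coefficient of e^mu in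
  prod_{alpha>0} (1 - q e^alpha)^{-1}, i.e. the sum of q^(sum f) over all ways
  f of writing mu as a nonnegative integer combination of positive roots
  (zero if mu is not in Q_+).\<close>
definition Pq :: "'a::euclidean_space set \<Rightarrow> 'a set \<Rightarrow> 'a \<Rightarrow> int poly" where
  "Pq R S \<mu> = (\<Sum>f \<in> {f :: 'a \<Rightarrow> nat. (\<forall>b. b \<notin> pos_roots R S \<longrightarrow> f b = 0)
                      \<and> (\<Sum>b\<in>pos_roots R S. of_nat (f b) *\<^sub>R b) = \<mu>}.
                monom 1 (\<Sum>b\<in>pos_roots R S. f b))"

definition mq :: "'a::euclidean_space set \<Rightarrow> 'a set \<Rightarrow> 'a \<Rightarrow> 'a \<Rightarrow> int poly" where
  "mq R S lam \<mu> = (\<Sum>w\<in>weyl R. of_int (wsign S w) *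
                    Pq R S (w (lam + rho R S) - (\<mu> + rho R S)))"

definition short_roots :: "'a::euclidean_space set \<Rightarrow> 'a set" where
  "short_roots R = {b\<in>R. \<forall>c\<in>R. b \<bullet> b \<le> c \<bullet> c}"

end

theory Submission
  imports Defs
begin

(* For a simple root s the Kostant q-partition function splits according to whether
   s is used:  P(g) = P_s(g) + q P(g - s), where P_s only uses the positive roots
   other than s.  The simple reflection r_s permutes those roots, so P_s is
   r_s-invariant; together with r_s rho = rho - s and sign(r_s w) = - sign(w) this
   yields the key identity
       m(mu) - q m(mu + s) = - (m(r_s mu - s) - q m(r_s mu)).
   For mu = 0 it is the last claimed identity; if r_s mu = mu + s both sides agree up
   to sign, hence m(mu) = q m(mu + s).  A short positive root mu that is not dominant
   has a simple root t with mu . t < 0, and then r_t mu = mu + t is again a short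
   positive root, one higher.  Raising alpha this way ends in a dominant short root,
   which in an irreducible root system is unique, hence equal to alpha+; counting
   steps gives q m(alpha) = q^ht(alpha+) m(alpha+). *)

lemma refl_add: "refl a (x + y) = refl a x + refl a y"
  unfolding refl_def by (simp add: inner_add_left add_divide_distrib scaleR_add_left algebra_simps)

lemma refl_scale: "refl a (c *\<^sub>R x) = c *\<^sub>R refl a x"
  unfolding refl_def by (simp add: inner_scaleR_left algebra_simps)

lemma refl_linear: "linear (refl a)"
  by (intro linearI refl_add refl_scale)

lemma refl_neg: "refl a (- x) = - refl a x"
  using refl_scale[of a "-1" x] by simp

lemma refl_diff: "refl a (x - y) = refl a x - refl a y"
  using refl_add[of a x "-y"] refl_neg[of a y] by simp

lemma refl_zero: "refl a 0 = 0"
  unfolding refl_def by simp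

lemma refl_sum: "refl a (sum f A) = (\<Sum>x\<in>A. refl a (f x))"
  using linear_sum[OF refl_linear] by simp

lemma refl_refl: "a \<noteq> 0 \<Longrightarrow> refl a (refl a x) = x"
  unfolding refl_def by (simp add: inner_diff_left inner_scaleR_left algebra_simps)

lemma refl_self: "a \<noteq> 0 \<Longrightarrow> refl a a = - a"
  unfolding refl_def by (simp add: algebra_simps scaleR_2)

lemma refl_negroot: "refl (- a) = refl a"
  unfolding refl_def by (rule ext) simp

lemma refl_inner:
  assumes "a \<noteq> 0" shows "refl a x \<bullet> refl a y = x \<bullet> y"
proof -
  have "a \<bullet> a \<noteq> 0" using assms by simp
  moreover have "a \<bullet> y = y \<bullet> a" "a \<bullet> x = x \<bullet> a" by (simp_all add: inner_commute)
  ultimately show ?thesis unfolding refl_def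
    by (simp only: inner_diff_left inner_diff_right inner_scaleR_left inner_scaleR_right)
       (simp add: field_simps)
qed

lemma refl_conj:
  assumes lin: "linear g" and inv: "\<And>x. g (h x) = x" and iso: "\<And>x y. g x \<bullet> g y = x \<bullet> y"
  shows "refl (g a) = g \<circ> refl a \<circ> h"
proof
  fix x
  have i1: "h x \<bullet> a = x \<bullet> g a" using iso[of "h x" a] inv by simp
  have "(g \<circ> refl a \<circ> h) x = g (h x - (2 * (h x \<bullet> a) / (a \<bullet> a)) *\<^sub>R a)"
    by (simp add: refl_def)
  also have "\<dots> = x - (2 * (x \<bullet> g a) / (g a \<bullet> g a)) *\<^sub>R g a"
    using inv i1 iso[of a a] by (simp add: linear_diff[OF lin] linear_scale[OF lin])
  finally show "refl (g a) x = (g \<circ> refl a \<circ> h) x" by (simp add: refl_def)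
qed

definition refl_word :: "'a::euclidean_space list \<Rightarrow> 'a \<Rightarrow> 'a" where
  "refl_word xs = foldr (\<lambda>a f. refl a \<circ> f) xs id"

lemma refl_word_Nil [simp]: "refl_word [] = id"
  unfolding refl_word_def by simp

lemma refl_word_Cons [simp]: "refl_word (a # xs) = refl a \<circ> refl_word xs"
  unfolding refl_word_def by simp

lemma refl_word_append: "refl_word (xs @ ys) = refl_word xs \<circ> refl_word ys"
  by (induction xs) auto

lemma refl_word_linear: "linear (refl_word xs)"
proof (induction xs)
  case Nil show ?case unfolding refl_word_Nil by (rule linear_id)
next
  case (Cons a xs) show ?case unfolding refl_word_Cons by (rule linear_compose[OF Cons.IH refl_linear])
qed

lemma refl_word_rev: "0 \<notin> set xs \<Longrightarrow> refl_word (rev xs) (refl_word xs x) = x"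
proof (induction xs arbitrary: x)
  case (Cons a xs)
  then show ?case by (simp add: refl_word_append refl_refl)
qed simp

lemma refl_word_inner: "0 \<notin> set xs \<Longrightarrow> refl_word xs x \<bullet> refl_word xs y = x \<bullet> y"
  by (induction xs) (auto simp: refl_inner)

locale based_root_system =
  fixes R S :: "'a::euclidean_space set"
  assumes rs: "root_system R" and base: "is_base R S"
begin

lemma finR: "finite R"
  using rs unfolding root_system_def by simp

lemma nonzero: "a \<in> R \<Longrightarrow> a \<noteq> 0"
  using rs unfolding root_system_def by auto

lemma refl_mem: "a \<in> R \<Longrightarrow> b \<in> R \<Longrightarrow> refl a b \<in> R"
  using rs unfolding root_system_def by blast

lemma cartan_int: "a \<in> R \<Longrightarrow> b \<in> R \<Longrightarrow> 2 * (b \<bullet> a) / (a \<bullet> a) \<in> \<int>"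
  using rs unfolding root_system_def by blast

lemma reduced: "a \<in> R \<Longrightarrow> c *\<^sub>R a \<in> R \<Longrightarrow> c = 1 \<or> c = -1"
  using rs unfolding root_system_def by blast

lemma neg_mem: "a \<in> R \<Longrightarrow> - a \<in> R"
  using refl_mem[of a a] refl_self[of a] nonzero by metis

lemma SR: "S \<subseteq> R"
  using base unfolding is_base_def by simp

lemma indS: "independent S"
  using base unfolding is_base_def by simp

lemma finS: "finite S"
  using indS finiteI_independent by metis

lemma root_comb: "b \<in> R \<Longrightarrow> \<exists>c::'a \<Rightarrow> int. b = (\<Sum>s\<in>S. of_int (c s) *\<^sub>R s)
        \<and> ((\<forall>s\<in>S. c s \<ge> 0) \<or> (\<forall>s\<in>S. c s \<le> 0))"
  using base unfolding is_base_def by blast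

(* The simple roots form a basis of the ambient space, since the roots span it. *)
lemma spanS: "span S = UNIV"
proof -
  have "R \<subseteq> span S"
  proof
    fix b assume "b \<in> R"
    then obtain c :: "'a \<Rightarrow> int" where "b = (\<Sum>s\<in>S. of_int (c s) *\<^sub>R s)"
      using root_comb by blast
    then show "b \<in> span S" by (auto intro: span_sum span_scale span_base)
  qed
  then have "span R \<subseteq> span S" by (simp add: span_minimal)
  then show ?thesis using rs unfolding root_system_def by auto
qed

definition coord :: "'a \<Rightarrow> 'a \<Rightarrow> real" where
  "coord x = representation S x"

lemma coord_sum_eq: "(\<Sum>s\<in>S. coord x s *\<^sub>R s) = x"
  unfolding coord_def using sum_representation_eq[OF indS _ finS] spanS by auto

lemma coord_unique:
  assumes "(\<Sum>s\<in>S. c s *\<^sub>R s) = x" "s \<in> S"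
  shows "coord x s = c s"
proof (rule ccontr)
  assume ne: "coord x s \<noteq> c s"
  have "(\<Sum>t\<in>S. (coord x t - c t) *\<^sub>R t) = 0"
    using assms(1) coord_sum_eq[of x] by (simp add: scaleR_diff_left sum_subtractf)
  then have "dependent S" unfolding dependent_finite[OF finS] using ne assms(2)
    by (intro exI[of _ "\<lambda>t. coord x t - c t"]) auto
  then show False using indS by simp
qed

lemma coord_add: "s \<in> S \<Longrightarrow> coord (x + y) s = coord x s + coord y s"
  by (rule coord_unique) (simp add: scaleR_add_left sum.distrib coord_sum_eq)

lemma coord_scale: "s \<in> S \<Longrightarrow> coord (c *\<^sub>R x) s = c * coord x s"
  by (rule coord_unique)
     (simp add: scaleR_sum_right[symmetric] coord_sum_eq flip: scaleR_scaleR)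

lemma coord_neg: "s \<in> S \<Longrightarrow> coord (- x) s = - coord x s"
  using coord_scale[of s "-1" x] by simp

lemma coord_diff: "s \<in> S \<Longrightarrow> coord (x - y) s = coord x s - coord y s"
  using coord_add[of s x "-y"] coord_neg[of s y] by simp

lemma coord_zero: "s \<in> S \<Longrightarrow> coord 0 s = 0"
  using coord_scale[of s 0 0] by simp

lemma coord_basis: "t \<in> S \<Longrightarrow> s \<in> S \<Longrightarrow> coord t s = (if s = t then 1 else 0)"
  by (rule coord_unique)
     (simp_all add: if_distrib[of "\<lambda>c. c *\<^sub>R _"] sum.delta finS cong: if_cong)

lemma eq_by_coord: "(\<And>s. s \<in> S \<Longrightarrow> coord x s = coord y s) \<Longrightarrow> x = y"
  using coord_sum_eq[of x] coord_sum_eq[of y] by (metis (no_types, lifting) sum.cong)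

lemma zero_by_coord: "(\<And>s. s \<in> S \<Longrightarrow> coord x s = 0) \<Longrightarrow> x = 0"
  using eq_by_coord[of x 0] coord_zero by auto

lemma inner_coord: "x \<bullet> d = (\<Sum>t\<in>S. coord x t * (t \<bullet> d))"
proof -
  have "x \<bullet> d = (\<Sum>t\<in>S. coord x t *\<^sub>R t) \<bullet> d" using coord_sum_eq[of x] by simp
  also have "\<dots> = (\<Sum>t\<in>S. coord x t * (t \<bullet> d))" by (simp add: inner_sum_left)
  finally show ?thesis .
qed

(* A root whose coordinates vanish outside a simple root t is t or -t (R is reduced). *)
lemma root_on_simple:
  assumes b: "b \<in> R" and t: "t \<in> S" and z: "\<forall>u\<in>S. u \<noteq> t \<longrightarrow> coord b u = 0"
  shows "b = t \<or> b = - t"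
proof -
  have tR: "t \<in> R" using t SR by auto
  have b_eq: "b = coord b t *\<^sub>R t"
  proof (rule eq_by_coord)
    fix u assume u: "u \<in> S"
    show "coord b u = coord (coord b t *\<^sub>R t) u"
      using z u by (cases "u = t") (auto simp: coord_scale coord_basis t)
  qed
  then have "coord b t = 1 \<or> coord b t = -1" using reduced[OF tR] b by simp
  then show ?thesis using b_eq by auto
qed

lemma coord_int: "b \<in> R \<Longrightarrow> s \<in> S \<Longrightarrow> coord b s \<in> \<int>"
  using root_comb[of b] coord_unique[of _ b s] by fastforce

lemma root_sign: "b \<in> R \<Longrightarrow> (\<forall>s\<in>S. coord b s \<ge> 0) \<or> (\<forall>s\<in>S. coord b s \<le> 0)"
proof -
  assume b: "b \<in> R"
  then obtain c :: "'a \<Rightarrow> int" where c: "b = (\<Sum>s\<in>S. of_int (c s) *\<^sub>R s)"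
    and sg: "(\<forall>s\<in>S. c s \<ge> 0) \<or> (\<forall>s\<in>S. c s \<le> 0)" using root_comb by blast
  have "s \<in> S \<Longrightarrow> coord b s = of_int (c s)" for s by (rule coord_unique) (use c in auto)
  then show ?thesis using sg by auto
qed

abbreviation P where "P \<equiv> pos_roots R S"

lemma pos_iff: "b \<in> P \<longleftrightarrow> b \<in> R \<and> (\<forall>s\<in>S. coord b s \<ge> 0)"
proof
  assume "b \<in> P"
  then obtain c :: "'a \<Rightarrow> nat" where b: "b \<in> R" and c: "b = (\<Sum>s\<in>S. of_nat (c s) *\<^sub>R s)"
    unfolding pos_roots_def Qplus_def by blast
  have "s \<in> S \<Longrightarrow> coord b s = of_nat (c s)" for s by (rule coord_unique) (use c in auto)
  then show "b \<in> R \<and> (\<forall>s\<in>S. coord b s \<ge> 0)" using b by auto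
next
  assume h: "b \<in> R \<and> (\<forall>s\<in>S. coord b s \<ge> 0)"
  define c where "c s = nat \<lfloor>coord b s\<rfloor>" for s
  have "s \<in> S \<Longrightarrow> of_nat (c s) = coord b s" for s
    using coord_int[of b s] h unfolding c_def by (auto elim!: Ints_cases)
  then have "b = (\<Sum>s\<in>S. of_nat (c s) *\<^sub>R s)" using coord_sum_eq[of b]
    by (metis (no_types, lifting) sum.cong)
  then show "b \<in> P" using h unfolding pos_roots_def Qplus_def by blast
qed

lemma PR: "P \<subseteq> R"
  unfolding pos_roots_def by auto

lemma finP: "finite P"
  using finite_subset[OF PR finR] .

lemma pos_or_neg: "b \<in> R \<Longrightarrow> b \<in> P \<or> - b \<in> P"
  using root_sign[of b] neg_mem[of b] by (auto simp: pos_iff coord_neg)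

lemma not_both: "b \<in> P \<Longrightarrow> - b \<notin> P"
proof
  assume "b \<in> P" "- b \<in> P"
  then have "s \<in> S \<Longrightarrow> coord b s = 0" for s by (force simp: pos_iff coord_neg)
  then have "b = 0" by (rule zero_by_coord)
  then show False using \<open>b \<in> P\<close> PR nonzero by auto
qed

lemma S_pos: "s \<in> S \<Longrightarrow> s \<in> P"
  using SR by (auto simp: pos_iff coord_basis)

lemma pos_dom_nonneg:
  assumes x: "x \<in> P" and d: "\<forall>t\<in>S. d \<bullet> t \<ge> 0" shows "x \<bullet> d \<ge> 0"
proof -
  have "\<forall>t\<in>S. coord x t \<ge> 0" using x by (simp add: pos_iff)
  then have "(\<Sum>t\<in>S. coord x t * (t \<bullet> d)) \<ge> 0" using d
    by (intro sum_nonneg) (simp add: inner_commute)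
  then show ?thesis using inner_coord[of x d] by simp
qed

lemma pos_has_pos_simple: assumes a: "a \<in> P" shows "\<exists>t\<in>S. a \<bullet> t > 0"
proof (rule ccontr)
  assume "\<not> ?thesis"
  then have "\<forall>t\<in>S. - a \<bullet> t \<ge> 0" by auto
  then have "a \<bullet> - a \<ge> 0" using pos_dom_nonneg[OF a] by blast
  then have "a = 0" by (simp add: not_less[symmetric])
  then show False using a PR nonzero by auto
qed

definition height :: "'a \<Rightarrow> real" where
  "height x = (\<Sum>s\<in>S. coord x s)"

lemma height_add: "height (x + y) = height x + height y"
  unfolding height_def by (simp add: coord_add sum.distrib)

lemma height_diff: "height (x - y) = height x - height y"
  unfolding height_def by (simp add: coord_diff sum_subtractf)

lemma height_scale: "height (c *\<^sub>R x) = c * height x"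
  unfolding height_def by (simp add: coord_scale sum_distrib_left)

lemma height_zero: "height 0 = 0"
  unfolding height_def by (simp add: coord_zero)

lemma height_sum: "height (sum g A) = (\<Sum>x\<in>A. height (g x))"
  by (induction A rule: infinite_finite_induct) (simp_all add: height_add height_zero)

lemma height_simple: "s \<in> S \<Longrightarrow> height s = 1"
  unfolding height_def by (simp add: coord_basis finS)

lemma height_pos: assumes b: "b \<in> P" shows "height b \<ge> 1"
proof -
  have "b \<noteq> 0" using b PR nonzero by auto
  then obtain t where t: "t \<in> S" "coord b t \<noteq> 0" using zero_by_coord by blast
  have ge: "\<forall>s\<in>S. coord b s \<ge> 0" using b by (simp add: pos_iff)
  have "coord b t \<in> \<int>" using coord_int t b PR by auto
  then have "coord b t \<ge> 1" using t ge by (auto elim!: Ints_cases)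
  also have "coord b t \<le> height b" unfolding height_def
    using member_le_sum[of t S "coord b"] t ge finS by auto
  finally show ?thesis .
qed

lemma ht_root: assumes g: "\<gamma> \<in> R" shows "real_of_int (ht S \<gamma>) = height \<gamma>"
proof -
  obtain c :: "'a \<Rightarrow> int" where c: "\<gamma> = (\<Sum>s\<in>S. of_int (c s) *\<^sub>R s)"
    using root_comb[OF g] by blast
  have coord_c: "\<And>c'. \<gamma> = (\<Sum>s\<in>S. of_int (c' s) *\<^sub>R s) \<Longrightarrow> s \<in> S \<Longrightarrow> coord \<gamma> s = of_int (c' s)"
    for s by (rule coord_unique) auto
  have "ht S \<gamma> = (\<Sum>s\<in>S. c s)"
    unfolding ht_def
  proof (rule the_equality)
    fix n assume "\<exists>c'::'a \<Rightarrow> int. \<gamma> = (\<Sum>s\<in>S. of_int (c' s) *\<^sub>R s) \<and> n = (\<Sum>s\<in>S. c' s)"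
    then obtain c' :: "'a \<Rightarrow> int"
      where c': "\<gamma> = (\<Sum>s\<in>S. of_int (c' s) *\<^sub>R s)" "n = (\<Sum>s\<in>S. c' s)" by blast
    have "s \<in> S \<Longrightarrow> c' s = c s" for s using coord_c[OF c] coord_c[OF c'(1)] by force
    then show "n = (\<Sum>s\<in>S. c s)" using c' by simp
  qed (use c in blast)
  then show ?thesis unfolding height_def using coord_c[OF c] by simp
qed

lemma pos_root_induct [consumes 1, case_names step]:
  assumes "b \<in> P"
    and step: "\<And>b. b \<in> P \<Longrightarrow> (\<And>c. c \<in> P \<Longrightarrow> height c \<le> height b - 1 \<Longrightarrow> Q c) \<Longrightarrow> Q b"
  shows "Q b"
  using assms(1)
proof (induction "nat \<lceil>height b\<rceil>" arbitrary: b rule: less_induct)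
  case less
  show ?case
  proof (rule step[OF less.prems])
    fix c assume "c \<in> P" "height c \<le> height b - 1"
    moreover have "height b \<ge> 1" using height_pos[OF less.prems] .
    ultimately have "nat \<lceil>height c\<rceil> < nat \<lceil>height b\<rceil>"
      using height_pos[of c] by linarith
    then show "Q c" using less.hyps \<open>c \<in> P\<close> by blast
  qed
qed

end

context based_root_system
begin

lemma refl_simple_self: "s \<in> S \<Longrightarrow> refl s s = - s"
  using refl_self SR nonzero by auto

lemma refl_simple_invol: "s \<in> S \<Longrightarrow> refl s (refl s x) = x"
  using refl_refl SR nonzero by auto

lemma coord_refl: "s \<in> S \<Longrightarrow> t \<in> S \<Longrightarrow>
   coord (refl s b) t = coord b t - 2 * (b \<bullet> s) / (s \<bullet> s) * (if t = s then 1 else 0)"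
  unfolding refl_def by (simp add: coord_diff coord_scale coord_basis)

lemma height_refl: "t \<in> S \<Longrightarrow> height (refl t a) = height a - 2 * (a \<bullet> t) / (t \<bullet> t)"
  unfolding refl_def by (simp add: height_diff height_scale height_simple)

(* r_s only changes the s-coordinate, so it maps positive roots other than s to positive roots. *)
lemma refl_pos: assumes s: "s \<in> S" and b: "b \<in> P" and ne: "b \<noteq> s"
  shows "refl s b \<in> P"
proof (rule ccontr)
  assume np: "refl s b \<notin> P"
  have rR: "refl s b \<in> R" using refl_mem s SR b PR by auto
  have "\<forall>t\<in>S. coord (refl s b) t \<le> 0"
    using root_sign[OF rR] np rR by (auto simp: pos_iff)
  then have "\<forall>t\<in>S. t \<noteq> s \<longrightarrow> coord b t = 0"
    using b coord_refl[OF s] by (force simp: pos_iff)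
  then have "b = s \<or> b = - s" using root_on_simple b PR s by auto
  then show False using ne not_both[OF S_pos[OF s]] b by auto
qed

lemma refl_perm: assumes s: "s \<in> S" shows "bij_betw (refl s) (P - {s}) (P - {s})"
proof -
  have into: "refl s b \<in> P - {s}" if "b \<in> P - {s}" for b
  proof -
    have "refl s b \<noteq> s"
    proof
      assume "refl s b = s"
      then have "b = - s" using refl_simple_invol[OF s, of b] refl_simple_self[OF s] by metis
      then show False using that S_pos[OF s] not_both by auto
    qed
    then show ?thesis using refl_pos[OF s] that by auto
  qed
  show ?thesis
    by (rule bij_betw_byWitness[where f'="refl s"]) (use into refl_simple_invol[OF s] in auto)
qed

lemma rho_refl: assumes s: "s \<in> S" shows "refl s (rho R S) = rho R S - s"
proof -
  have sP: "s \<in> P" using S_pos[OF s] .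
  have "refl s (\<Sum>P) = (\<Sum>b\<in>P. refl s b)" by (simp add: refl_sum)
  also have "\<dots> = refl s s + (\<Sum>b\<in>P - {s}. refl s b)"
    using sP finP by (simp add: sum.remove)
  also have "(\<Sum>b\<in>P - {s}. refl s b) = (\<Sum>b\<in>P - {s}. b)"
    using sum.reindex_bij_betw[OF refl_perm[OF s], of id] by simp
  also have "\<dots> = \<Sum>P - s" using sP finP by (simp add: sum_diff1)
  finally have "refl s (\<Sum>P) = \<Sum>P - 2 *\<^sub>R s" using refl_simple_self[OF s] by (simp add: scaleR_2)
  then show ?thesis unfolding rho_def by (simp add: refl_scale scaleR_diff_right)
qed

lemma cartan_pos_ge1: assumes "a \<in> R" "t \<in> R" "a \<bullet> t > 0"
  shows "2 * (a \<bullet> t) / (t \<bullet> t) \<ge> 1"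
proof -
  have "2 * (a \<bullet> t) / (t \<bullet> t) > 0" using assms nonzero by (simp add: divide_pos_pos)
  moreover have "2 * (a \<bullet> t) / (t \<bullet> t) \<in> \<int>" using cartan_int assms by auto
  ultimately show ?thesis by (auto elim!: Ints_cases)
qed

lemma diff_root: assumes a: "a \<in> R" and b: "b \<in> R" and ab: "a \<bullet> b > 0" and ne: "a \<noteq> b"
  shows "a - b \<in> R"
proof -
  have a0: "a \<bullet> a > 0" and b0: "b \<bullet> b > 0" using a b nonzero by auto
  define k where "k = 2 * (a \<bullet> b) / (b \<bullet> b)"
  define l where "l = 2 * (b \<bullet> a) / (a \<bullet> a)"
  have k1: "k \<ge> 1" unfolding k_def using cartan_pos_ge1[OF a b ab] .
  have l1: "l \<ge> 1" unfolding l_def using cartan_pos_ge1[OF b a] ab by (simp add: inner_commute)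
  consider "k = 1" | "l = 1" | "k \<ge> 2" "l \<ge> 2"
    using k1 l1 cartan_int[OF b a] cartan_int[OF a b] unfolding k_def l_def
    by (fastforce elim!: Ints_cases)
  then show ?thesis
  proof cases
    case 1
    then have "refl b a = a - b" unfolding refl_def k_def[symmetric] by simp
    then show ?thesis using refl_mem[OF b a] by simp
  next
    case 2
    then have "refl a b = b - a" unfolding refl_def l_def[symmetric] by simp
    then show ?thesis using refl_mem[OF a b] neg_mem by fastforce
  next
    case 3
    then have "a \<bullet> b \<ge> b \<bullet> b" "a \<bullet> b \<ge> a \<bullet> a"
      unfolding k_def l_def using a0 b0 by (simp_all add: field_simps inner_commute)
    moreover have "(a - b) \<bullet> (a - b) = a \<bullet> a - 2 * (a \<bullet> b) + b \<bullet> b"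
      by (simp add: inner_diff_left inner_diff_right inner_commute)
    ultimately have "(a - b) \<bullet> (a - b) \<le> 0" by simp
    then show ?thesis using ne by (simp add: not_less[symmetric])
  qed
qed

lemma simple_pair: assumes s: "s \<in> S" and t: "t \<in> S" and ne: "s \<noteq> t" shows "s \<bullet> t \<le> 0"
proof (rule ccontr)
  assume "\<not> s \<bullet> t \<le> 0"
  then have "s - t \<in> R" using diff_root[of s t] SR s t ne by auto
  moreover have "coord (s - t) s = 1" "coord (s - t) t = -1"
    using s t ne by (simp_all add: coord_diff coord_basis)
  ultimately show False using root_sign[of "s - t"] s t by force
qed

end

lemma minus_one_power_eq_iff: "(-1::int) ^ m = (-1) ^ n \<longleftrightarrow> (even m \<longleftrightarrow> even n)"
  by (simp add: minus_one_power_iff)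

lemma card_toggle_parity:
  assumes "finite A"
  shows "even (card ((A - {x}) \<union> ({x} - A))) \<longleftrightarrow> odd (card A)"
proof (cases "x \<in> A")
  case True
  then have "(A - {x}) \<union> ({x} - A) = A - {x}" by auto
  then show ?thesis using True assms by (simp add: card_Diff_singleton) (metis card_0_eq
        card_Suc_Diff1 empty_iff even_Suc)
next
  case False
  then have "(A - {x}) \<union> ({x} - A) = insert x A" by auto
  then show ?thesis using False assms by simp
qed

context based_root_system
begin

lemma refl_word_root: "set xs \<subseteq> S \<Longrightarrow> b \<in> R \<Longrightarrow> refl_word xs b \<in> R"
  by (induction xs) (use SR refl_mem in auto)

lemma zero_notin_simple_word: "set xs \<subseteq> S \<Longrightarrow> 0 \<notin> set xs"
  using SR nonzero by auto

lemma refl_word_bij: assumes xs: "set xs \<subseteq> S" shows "bij_betw (refl_word xs) R R"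
proof (rule bij_betw_byWitness[where f' = "refl_word (rev xs)"])
  show "\<forall>a\<in>R. refl_word (rev xs) (refl_word xs a) = a"
    using refl_word_rev zero_notin_simple_word[OF xs] by blast
  show "\<forall>a\<in>R. refl_word xs (refl_word (rev xs) a) = a"
    using refl_word_rev[of "rev xs"] zero_notin_simple_word[OF xs] by simp
  show "refl_word xs ` R \<subseteq> R" "refl_word (rev xs) ` R \<subseteq> R"
    using refl_word_root[of xs] refl_word_root[of "rev xs"] xs by auto
qed

(* Every positive root is W-conjugate to a simple root: lower it by simple reflections. *)
lemma pos_conj_simple: assumes "a \<in> P"
  shows "\<exists>xs s. set xs \<subseteq> S \<and> s \<in> S \<and> a = refl_word xs s"
  using assms
proof (induction rule: pos_root_induct)
  case (step a)
  show ?case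
  proof (cases "a \<in> S")
    case True then show ?thesis by (intro exI[of _ "[]"] exI[of _ a]) auto
  next
    case False
    obtain t where t: "t \<in> S" "a \<bullet> t > 0" using pos_has_pos_simple[OF step.hyps] by blast
    have "refl t a \<in> P" using refl_pos[OF t(1) step.hyps] False t by auto
    moreover have "height (refl t a) \<le> height a - 1"
      using height_refl[OF t(1), of a] cartan_pos_ge1[of a t] t SR step.hyps PR by auto
    ultimately obtain xs s where xs: "set xs \<subseteq> S" "s \<in> S" "refl t a = refl_word xs s"
      using step.IH by blast
    then have "a = refl_word (t # xs) s" using refl_simple_invol[OF t(1), of a] by simp
    then show ?thesis using xs t by (intro exI[of _ "t # xs"] exI[of _ s]) auto
  qed
qed

(* Hence every root reflection is a word in simple reflections (conjugate of some r_s). *)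
lemma refl_as_word: assumes a: "a \<in> R"
  shows "\<exists>ys. set ys \<subseteq> S \<and> refl a = refl_word ys"
proof -
  obtain xs s where xs: "set xs \<subseteq> S" "s \<in> S" and a_eq: "a = refl_word xs s \<or> a = - refl_word xs s"
    using pos_or_neg[OF a] pos_conj_simple by (metis minus_minus)
  have z: "0 \<notin> set xs" using zero_notin_simple_word[OF xs(1)] .
  have "refl a = refl (refl_word xs s)" using a_eq refl_negroot by metis
  also have "\<dots> = refl_word xs \<circ> refl s \<circ> refl_word (rev xs)"
    using refl_conj[OF refl_word_linear _ refl_word_inner[OF z]] refl_word_rev[of "rev xs"] z
    by simp
  also have "\<dots> = refl_word (xs @ [s] @ rev xs)" by (simp add: refl_word_append comp_assoc)
  finally show ?thesis using xs by (intro exI[of _ "xs @ [s] @ rev xs"]) auto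
qed

lemma weyl_as_word: "w \<in> weyl R \<Longrightarrow> \<exists>xs. set xs \<subseteq> S \<and> w = refl_word xs"
proof (induction rule: weyl.induct)
  case weyl_id
  then show ?case by (intro exI[of _ "[]"]) auto
next
  case (weyl_step w a)
  then obtain xs ys where "set xs \<subseteq> S" "w = refl_word xs" "set ys \<subseteq> S" "refl a = refl_word ys"
    using refl_as_word by blast
  then show ?case by (intro exI[of _ "ys @ xs"]) (auto simp: refl_word_append)
qed

definition inversions :: "('a \<Rightarrow> 'a) \<Rightarrow> 'a set" where
  "inversions w = {b \<in> P. w b \<notin> P}"

lemma refl_simple_pos_iff: assumes s: "s \<in> S" and c: "c \<in> R"
  shows "refl s c \<notin> P \<longleftrightarrow> (c \<notin> P) \<noteq> (c = s \<or> c = - s)"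
proof -
  have sP: "s \<in> P" and nsP: "- s \<notin> P" using S_pos[OF s] not_both by auto
  consider "c = s" | "c = - s" | "c \<in> P" "c \<noteq> s" | "c \<notin> P" "c \<noteq> - s" by blast
  then show ?thesis
  proof cases
    case 1
    then show ?thesis using refl_simple_self[OF s] sP nsP by simp
  next
    case 2
    then show ?thesis using refl_simple_self[OF s] refl_neg[of s s] sP nsP by simp
  next
    case 3
    then show ?thesis using refl_pos[OF s] nsP by auto
  next
    case 4
    then have "- c \<in> P" "- c \<noteq> s" using pos_or_neg c by auto
    then have "refl s (- c) \<in> P" using refl_pos[OF s] by blast
    then have "- refl s c \<in> P" by (simp add: refl_neg)
    then have "refl s c \<notin> P" using not_both[of "- refl s c"] by simp
    then show ?thesis using 4 sP by auto
  qed
qed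

lemma unique_pos_preimage:
  assumes lin: "linear w" and bij: "bij_betw w R R" and s: "s \<in> R"
  obtains b1 where "{b \<in> P. w b = s \<or> w b = - s} = {b1}"
proof -
  obtain b0 where b0: "b0 \<in> R" "w b0 = s" using bij s by (metis bij_betw_iff_bijections)
  have inj: "x \<in> R \<Longrightarrow> y \<in> R \<Longrightarrow> w x = w y \<Longrightarrow> x = y" for x y
    using bij by (metis bij_betw_iff_bijections)
  have wn: "w (- b0) = - s" using linear_neg[OF lin] b0 by simp
  have "b \<in> P \<Longrightarrow> w b = s \<or> w b = - s \<longleftrightarrow> b = b0 \<or> b = - b0" for b
    using inj[of b b0] inj[of b "- b0"] b0 wn PR neg_mem by auto
  then have "{b \<in> P. w b = s \<or> w b = - s} = {if b0 \<in> P then b0 else - b0}"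
    using pos_or_neg[OF b0(1)] not_both by auto
  then show ?thesis using that by blast
qed

lemma inversions_parity_step:
  assumes lin: "linear w" and bij: "bij_betw w R R" and s: "s \<in> S"
  shows "even (card (inversions (refl s \<circ> w))) \<longleftrightarrow> odd (card (inversions w))"
proof -
  obtain b1 where b1: "{b \<in> P. w b = s \<or> w b = - s} = {b1}"
    using unique_pos_preimage[OF lin bij] s SR by blast
  have wR: "b \<in> P \<Longrightarrow> w b \<in> R" for b using bij PR by (auto dest: bij_betw_apply)
  have "inversions (refl s \<circ> w) = (inversions w - {b1}) \<union> ({b1} - inversions w)"
  proof (rule set_eqI)
    fix b
    show "b \<in> inversions (refl s \<circ> w) \<longleftrightarrow> b \<in> (inversions w - {b1}) \<union> ({b1} - inversions w)"
    proof (cases "b \<in> P")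
      case True
      then have "b = b1 \<longleftrightarrow> w b = s \<or> w b = - s" using b1 by blast
      then show ?thesis using True refl_simple_pos_iff[OF s wR[OF True]] unfolding inversions_def
        by auto
    next
      case False
      then show ?thesis using b1 unfolding inversions_def by auto
    qed
  qed
  moreover have "finite (inversions w)" unfolding inversions_def using finP by auto
  ultimately show ?thesis using card_toggle_parity[of "inversions w" b1] by simp
qed

lemma inversions_parity_word:
  "set xs \<subseteq> S \<Longrightarrow> (-1::int) ^ card (inversions (refl_word xs)) = (-1) ^ length xs"
proof (induction xs)
  case Nil
  show ?case by (simp add: inversions_def)
next
  case (Cons a xs)
  then have "even (card (inversions (refl_word (a # xs)))) \<longleftrightarrow> odd (card (inversions (refl_word xs)))"
    using inversions_parity_step[OF refl_word_linear refl_word_bij] by simp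
  moreover have "even (card (inversions (refl_word xs))) \<longleftrightarrow> even (length xs)"
    using Cons by (simp add: minus_one_power_eq_iff)
  ultimately show ?case by (simp add: minus_one_power_iff del: refl_word_Cons)
qed

lemma wsign_inversions: assumes w: "w \<in> weyl R" shows "wsign S w = (-1) ^ card (inversions w)"
proof -
  let ?Q = "\<lambda>n. \<exists>xs. set xs \<subseteq> S \<and> length xs = n \<and> w = foldr (\<lambda>a f. refl a \<circ> f) xs id"
  obtain xs where "set xs \<subseteq> S" "w = refl_word xs" using weyl_as_word[OF w] by blast
  then have "?Q (length xs)" unfolding refl_word_def by blast
  then have "?Q (LEAST n. ?Q n)" by (rule LeastI)
  then obtain ys where "set ys \<subseteq> S" "length ys = wlen S w" "w = refl_word ys"
    unfolding wlen_def refl_word_def by blast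
  then show ?thesis unfolding wsign_def using inversions_parity_word by simp
qed

lemma wsign_step: assumes w: "w \<in> weyl R" and s: "s \<in> S"
  shows "wsign S (refl s \<circ> w) = - wsign S w"
proof -
  have w2: "refl s \<circ> w \<in> weyl R" using weyl_step[OF w] s SR by auto
  obtain xs where xs: "set xs \<subseteq> S" "w = refl_word xs" using weyl_as_word[OF w] by blast
  have "even (card (inversions (refl s \<circ> w))) \<longleftrightarrow> odd (card (inversions w))"
    using inversions_parity_step[OF refl_word_linear refl_word_bij[OF xs(1)] s] xs(2) by simp
  then show ?thesis unfolding wsign_inversions[OF w] wsign_inversions[OF w2]
    by (simp add: minus_one_power_iff)
qed

end

context based_root_system
begin

definition partitions :: "'a set \<Rightarrow> 'a \<Rightarrow> ('a \<Rightarrow> nat) set" where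
  "partitions A g = {f. (\<forall>b. b \<notin> A \<longrightarrow> f b = 0) \<and> (\<Sum>b\<in>A. of_nat (f b) *\<^sub>R b) = g}"

definition kostant :: "'a set \<Rightarrow> 'a \<Rightarrow> int poly" where
  "kostant A g = (\<Sum>f\<in>partitions A g. monom 1 (\<Sum>b\<in>A. f b))"

lemma Pq_kostant: "Pq R S g = kostant P g"
  unfolding Pq_def kostant_def partitions_def by simp

(* Only finitely many partitions exist, since positive roots have height at least 1. *)
lemma finite_partitions: assumes A: "A \<subseteq> P" shows "finite (partitions A g)"
proof -
  have finA: "finite A" using finite_subset[OF A finP] .
  define N where "N = nat \<lceil>height g\<rceil>"
  have "partitions A g \<subseteq> {f. \<forall>x. (x \<in> A \<longrightarrow> f x \<in> {..N}) \<and> (x \<notin> A \<longrightarrow> f x = 0)}"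
  proof (intro subsetI CollectI allI conjI impI)
    fix f x assume f: "f \<in> partitions A g" and x: "x \<in> A"
    have nn: "\<forall>b\<in>A. 0 \<le> of_nat (f b) * height b" using height_pos A by force
    have "height g = (\<Sum>b\<in>A. of_nat (f b) * height b)"
      using f unfolding partitions_def by (auto simp: height_sum height_scale)
    also have "\<dots> \<ge> of_nat (f x) * height x"
      using member_le_sum[of x A "\<lambda>b. of_nat (f b) * height b"] x nn finA by auto
    also have "of_nat (f x) * height x \<ge> of_nat (f x)"
      using height_pos[of x] x A by (auto simp: mult_le_cancel_left1)
    finally have "real (f x) \<le> height g" .
    then show "f x \<in> {..N}" unfolding N_def by (simp add: le_nat_iff le_ceiling_iff)
  next
    fix f x assume "f \<in> partitions A g" "x \<notin> A"
    then show "f x = 0" unfolding partitions_def by auto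
  qed
  moreover have "finite {f. \<forall>x. (x \<in> A \<longrightarrow> f x \<in> {..N}) \<and> (x \<notin> A \<longrightarrow> f x = (0::nat))}"
    by (rule finite_set_of_finite_funs) (use finA in auto)
  ultimately show ?thesis by (rule finite_subset)
qed

lemma kostant_avoiding: assumes s: "s \<in> S"
  shows "(\<Sum>f\<in>{f \<in> partitions P g. f s = 0}. monom 1 (\<Sum>b\<in>P. f b)) = kostant (P - {s}) g"
proof -
  have eqs: "(\<Sum>b\<in>P. h b) = (\<Sum>b\<in>P - {s}. h b) + h s" for h :: "'a \<Rightarrow> 'b::comm_monoid_add"
    using S_pos[OF s] finP by (simp add: sum.remove add.commute)
  have "(\<Sum>f\<in>{f \<in> partitions P g. f s = 0}. monom 1 (\<Sum>b\<in>P. f b))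
      = (\<Sum>f\<in>{f \<in> partitions P g. f s = 0}. monom 1 (\<Sum>b\<in>P - {s}. f b))"
    by (rule sum.cong) (simp_all add: eqs)
  moreover have "{f \<in> partitions P g. f s = 0} = partitions (P - {s}) g"
    unfolding partitions_def using eqs[of "\<lambda>b. of_nat (_ b) *\<^sub>R b"] by (auto simp: eqs)
  ultimately show ?thesis unfolding kostant_def by simp
qed

(* Removing one summand s is a bijection from partitions using s onto partitions of g - s. *)
lemma kostant_using: assumes s: "s \<in> S"
  shows "(\<Sum>f\<in>{f \<in> partitions P g. f s \<noteq> 0}. monom 1 (\<Sum>b\<in>P. f b))
       = monom 1 1 * kostant P (g - s)"
proof -
  have sP: "s \<in> P" using S_pos[OF s] .
  have eqs: "(\<Sum>b\<in>P. h b) = h s + (\<Sum>b\<in>P - {s}. h b)" for h :: "'a \<Rightarrow> 'b::comm_monoid_add"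
    using sP finP by (simp add: sum.remove)
  have "monom 1 1 * kostant P (g - s)
      = (\<Sum>h\<in>partitions P (g - s). monom 1 (\<Sum>b\<in>P. (h(s := h s + 1)) b))"
    unfolding kostant_def sum_distrib_left by (rule sum.cong) (auto simp: eqs mult_monom)
  also have "\<dots> = (\<Sum>f\<in>{f \<in> partitions P g. f s \<noteq> 0}. monom 1 (\<Sum>b\<in>P. f b))"
  proof (rule sum.reindex_bij_witness[where i = "\<lambda>f. f(s := f s - 1)" and j = "\<lambda>h. h(s := h s + 1)"])
    fix f assume f: "f \<in> {f \<in> partitions P g. f s \<noteq> 0}"
    show "(f(s := f s - 1))(s := (f(s := f s - 1)) s + 1) = f" using f by auto
    have "(\<Sum>b\<in>P. of_nat ((f(s := f s - 1)) b) *\<^sub>R b) = (\<Sum>b\<in>P. of_nat (f b) *\<^sub>R b) - s"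
      using f by (simp add: eqs of_nat_diff scaleR_diff_left)
    then show "f(s := f s - 1) \<in> partitions P (g - s)" using f sP unfolding partitions_def by auto
  next
    fix h assume h: "h \<in> partitions P (g - s)"
    show "(h(s := h s + 1))(s := (h(s := h s + 1)) s - 1) = h" by auto
    have "(\<Sum>b\<in>P. of_nat ((h(s := h s + 1)) b) *\<^sub>R b) = (\<Sum>b\<in>P. of_nat (h b) *\<^sub>R b) + s"
      by (simp add: eqs scaleR_add_left)
    then show "h(s := h s + 1) \<in> {f \<in> partitions P g. f s \<noteq> 0}"
      using h sP unfolding partitions_def by auto
  qed simp
  finally show ?thesis by simp
qed

lemma kostant_split: assumes s: "s \<in> S"
  shows "kostant P g = kostant (P - {s}) g + monom 1 1 * kostant P (g - s)"
proof -
  have fin: "finite (partitions P g)" by (rule finite_partitions) simp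
  have "partitions P g = {f \<in> partitions P g. f s = 0} \<union> {f \<in> partitions P g. f s \<noteq> 0}"
    by auto
  then have "kostant P g = (\<Sum>f\<in>{f \<in> partitions P g. f s = 0}. monom 1 (\<Sum>b\<in>P. f b))
      + (\<Sum>f\<in>{f \<in> partitions P g. f s \<noteq> 0}. monom 1 (\<Sum>b\<in>P. f b))"
    unfolding kostant_def by (metis (no_types, lifting) sum.union_disjoint fin finite_Un
        disjoint_iff mem_Collect_eq)
  then show ?thesis using kostant_avoiding[OF s] kostant_using[OF s] by simp
qed

(* P_s is invariant under r_s, because r_s permutes P - {s}. *)
lemma kostant_refl: assumes s: "s \<in> S"
  shows "kostant (P - {s}) (refl s g) = kostant (P - {s}) g"
proof -
  let ?A = "P - {s}"
  have bij: "bij_betw (refl s) ?A ?A" using refl_perm[OF s] .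
  have inA: "b \<in> ?A \<longleftrightarrow> refl s b \<in> ?A" for b
    using bij refl_simple_invol[OF s] by (metis bij_betw_apply)
  have reindex: "(\<Sum>b\<in>?A. h (refl s b)) = (\<Sum>b\<in>?A. h b)" for h :: "'a \<Rightarrow> 'b::comm_monoid_add"
    using sum.reindex_bij_betw[OF bij, of h] by simp
  have comp_mem: "f \<circ> refl s \<in> partitions ?A (refl s x)" if f: "f \<in> partitions ?A x" for f x
  proof -
    have "(\<Sum>b\<in>?A. of_nat ((f \<circ> refl s) b) *\<^sub>R b)
        = (\<Sum>b\<in>?A. of_nat (f (refl s b)) *\<^sub>R refl s (refl s b))"
      by (simp add: refl_simple_invol[OF s])
    also have "\<dots> = (\<Sum>b\<in>?A. of_nat (f b) *\<^sub>R refl s b)"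
      using reindex[of "\<lambda>c. of_nat (f c) *\<^sub>R refl s c"] by simp
    also have "\<dots> = refl s x"
      using f unfolding partitions_def by (auto simp: refl_sum refl_scale)
    finally show ?thesis using f inA unfolding partitions_def by auto
  qed
  show ?thesis unfolding kostant_def
  proof (rule sum.reindex_bij_witness[where j = "\<lambda>f. f \<circ> refl s" and i = "\<lambda>f. f \<circ> refl s"])
    fix f assume f: "f \<in> partitions ?A g"
    show "(f \<circ> refl s) \<circ> refl s = f" by (auto simp: refl_simple_invol[OF s])
    show "f \<circ> refl s \<in> partitions ?A (refl s g)" using comp_mem[OF f] .
  next
    fix f assume f: "f \<in> partitions ?A (refl s g)"
    show "(f \<circ> refl s) \<circ> refl s = f" by (auto simp: refl_simple_invol[OF s])
    show "f \<circ> refl s \<in> partitions ?A g"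
      using comp_mem[OF f] by (simp add: refl_simple_invol[OF s])
    show "monom 1 (\<Sum>b\<in>?A. (f \<circ> refl s) b) = monom 1 (\<Sum>b\<in>?A. f b)" using reindex[of f] by simp
  qed
qed

end

lemma int_poly_self_neg: "(x::int poly) = - x \<Longrightarrow> x = 0"
  by (rule poly_eqI) (metis coeff_minus coeff_0 add.inverse_inverse equation_minus_iff neg_equal_zero)

context based_root_system
begin

definition mq_avoiding :: "'a \<Rightarrow> 'a \<Rightarrow> 'a \<Rightarrow> int poly" where
  "mq_avoiding s lam \<mu> = (\<Sum>w\<in>weyl R. of_int (wsign S w) *
      kostant (P - {s}) (w (lam + rho R S) - (\<mu> + rho R S)))"

(* Summing the splitting of P over W:  m(mu) = m_s(mu) + q m(mu + s). *)
lemma mq_split: assumes s: "s \<in> S"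
  shows "mq R S lam \<mu> = mq_avoiding s lam \<mu> + monom 1 1 * mq R S lam (\<mu> + s)"
proof -
  have shift: "x - (\<mu> + rho R S) - s = x - (\<mu> + s + rho R S)" for x
    by (simp add: algebra_simps)
  have "mq R S lam \<mu> = (\<Sum>w\<in>weyl R. of_int (wsign S w) *
        (kostant (P - {s}) (w (lam + rho R S) - (\<mu> + rho R S))
         + monom 1 1 * kostant P (w (lam + rho R S) - (\<mu> + s + rho R S))))"
    unfolding mq_def Pq_kostant
    by (rule sum.cong) (simp_all only: kostant_split[OF s, of "_ - (\<mu> + rho R S)"] shift)
  also have "\<dots> = mq_avoiding s lam \<mu> + monom 1 1 * mq R S lam (\<mu> + s)"
    unfolding mq_avoiding_def mq_def Pq_kostant
    by (simp add: distrib_left sum.distrib sum_distrib_left mult.left_commute)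
  finally show ?thesis .
qed

(* Reindexing w -> r_s w, using r_s rho = rho - s, sign(r_s w) = -sign(w) and the
   r_s-invariance of P_s:  m_s(r_s mu - s) = - m_s(mu). *)
lemma mq_avoiding_refl: assumes s: "s \<in> S"
  shows "mq_avoiding s lam (refl s \<mu> - s) = - mq_avoiding s lam \<mu>"
proof -
  let ?x = "lam + rho R S" and ?y = "\<mu> + rho R S" and ?A = "P - {s}"
  have sR: "s \<in> R" using s SR by auto
  have y: "refl s \<mu> - s + rho R S = refl s ?y" using rho_refl[OF s] by (simp add: refl_add)
  have inv: "kostant ?A (w ?x - refl s ?y) = kostant ?A (refl s (w ?x) - ?y)" for w
  proof -
    have "w ?x - refl s ?y = refl s (refl s (w ?x) - ?y)"
      by (simp add: refl_diff refl_simple_invol[OF s])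
    then show ?thesis using kostant_refl[OF s, of "refl s (w ?x) - ?y"] by simp
  qed
  have "mq_avoiding s lam (refl s \<mu> - s)
      = (\<Sum>w\<in>weyl R. of_int (wsign S w) * kostant ?A (refl s (w ?x) - ?y))"
    unfolding mq_avoiding_def y inv ..
  also have "\<dots> = (\<Sum>w\<in>weyl R. - (of_int (wsign S w) * kostant ?A (w ?x - ?y)))"
  proof (rule sum.reindex_bij_witness[where i = "\<lambda>w. refl s \<circ> w" and j = "\<lambda>w. refl s \<circ> w"])
    fix w assume w: "w \<in> weyl R"
    show "- (of_int (wsign S (refl s \<circ> w)) * kostant ?A ((refl s \<circ> w) ?x - ?y)) =
        of_int (wsign S w) * kostant ?A (refl s (w ?x) - ?y)"
      using wsign_step[OF w s] by simp
  qed (auto simp: refl_simple_invol[OF s] intro: weyl_step[OF _ sR])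
  also have "\<dots> = - mq_avoiding s lam \<mu>" unfolding mq_avoiding_def by (simp add: sum_negf)
  finally show ?thesis .
qed

lemma mq_key: assumes s: "s \<in> S"
  shows "mq R S lam \<mu> - monom 1 1 * mq R S lam (\<mu> + s) =
     - (mq R S lam (refl s \<mu> - s) - monom 1 1 * mq R S lam (refl s \<mu>))"
  using mq_split[OF s, of lam \<mu>] mq_split[OF s, of lam "refl s \<mu> - s"]
    mq_avoiding_refl[OF s, of lam \<mu>] by simp

(* If r_s mu = mu + s, both sides of the key identity coincide, so m(mu) = q m(mu + s). *)
lemma mq_raise: assumes s: "s \<in> S" and m: "refl s \<mu> = \<mu> + s"
  shows "mq R S lam \<mu> = monom 1 1 * mq R S lam (\<mu> + s)"
proof -
  have "mq R S lam \<mu> - monom 1 1 * mq R S lam (\<mu> + s)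
      = - (mq R S lam \<mu> - monom 1 1 * mq R S lam (\<mu> + s))"
    using mq_key[OF s, of lam \<mu>] m by simp
  then show ?thesis using int_poly_self_neg by simp
qed

lemma mq_zero: assumes s: "s \<in> S"
  shows "mq R S lam 0 - monom 1 1 * mq R S lam s = monom 1 1 * mq R S lam 0 - mq R S lam (- s)"
  using mq_key[OF s, of lam 0] by (simp add: refl_zero)

end

context based_root_system
begin

definition supported :: "'a set \<Rightarrow> 'a \<Rightarrow> bool" where
  "supported X x \<longleftrightarrow> (\<forall>s\<in>S - X. coord x s = 0)"

lemma supported_neg: "supported X (- x) \<longleftrightarrow> supported X x"
  unfolding supported_def by (simp add: coord_neg)

lemma supported_orth:
  assumes X: "X \<subseteq> S" and orth: "\<forall>t\<in>X. \<forall>u\<in>S - X. t \<bullet> u = 0"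
    and x: "supported X x" and y: "supported (S - X) y"
  shows "x \<bullet> y = 0"
proof -
  have "t \<bullet> y = 0" if t: "t \<in> X" for t
  proof -
    have "coord y u * (u \<bullet> t) = 0" if u: "u \<in> S" for u
      using y orth t u unfolding supported_def by (cases "u \<in> X") (auto simp: inner_commute)
    then show ?thesis using inner_coord[of y t] by (simp add: inner_commute sum.neutral)
  qed
  then have "x \<bullet> y = (\<Sum>t\<in>S. coord x t * (t \<bullet> y))" and "\<forall>t\<in>S. coord x t * (t \<bullet> y) = 0"
    using inner_coord[of x y] x unfolding supported_def by auto
  then show ?thesis by simp
qed

(* If S splits orthogonally as X and S - X, adding a simple root t to a positive root
   supported on X gives a root only when t \<in> X (otherwise b + t and b - t would both be
   roots, the latter of mixed sign).  So supports are preserved. *)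
lemma supported_add_simple:
  assumes X: "X \<subseteq> S" and orth: "\<forall>x\<in>X. \<forall>u\<in>S - X. x \<bullet> u = 0"
    and b: "b \<in> P" "supported X b" and t: "t \<in> S" and bt: "b + t \<in> R"
  shows "supported X (b + t)"
proof (cases "t \<in> X")
  case True
  then show ?thesis using b t unfolding supported_def by (auto simp: coord_add coord_basis)
next
  case tX: False
  have tR: "t \<in> R" using t SR by auto
  have "b \<bullet> t = (\<Sum>s\<in>S. coord b s * (s \<bullet> t))" by (rule inner_coord)
  also have "\<dots> = 0" using b(2) orth t tX unfolding supported_def
    by (intro sum.neutral) (metis DiffI mult_eq_0_iff)
  finally have "refl t (b + t) = b - t" unfolding refl_def using nonzero[OF tR]
    by (simp add: inner_add_left scaleR_2 algebra_simps)
  then have r: "b - t \<in> R" using refl_mem[OF tR bt] by simp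
  have "b \<noteq> 0" using b PR nonzero by auto
  then obtain u where u: "u \<in> S" "coord b u \<noteq> 0" using zero_by_coord by blast
  then have "u \<in> X" "coord b u > 0" using b unfolding supported_def
    by (auto simp: pos_iff order_le_less)
  then have "coord (b - t) u > 0" using u tX by (auto simp: coord_diff coord_basis t)
  moreover have "coord (b - t) t = -1" using b(2) t tX unfolding supported_def
    by (simp add: coord_diff coord_basis)
  ultimately have False using root_sign[OF r] u t by force
  then show ?thesis ..
qed

(* For an orthogonal splitting of S, each positive root is supported on one of the parts:
   peel off simple roots, by induction on the height. *)
lemma pos_root_supported_part:
  assumes X: "X \<subseteq> S" and orth: "\<forall>x\<in>X. \<forall>u\<in>S - X. x \<bullet> u = 0" and b: "b \<in> P"
  shows "supported X b \<or> supported (S - X) b"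
  using b
proof (induction rule: pos_root_induct)
  case (step b)
  have orth': "\<forall>x\<in>S - X. \<forall>u\<in>S - (S - X). x \<bullet> u = 0"
    using orth by (metis Diff_iff inner_commute)
  show ?case
  proof (cases "b \<in> S")
    case True
    then show ?thesis unfolding supported_def by (auto simp: coord_basis)
  next
    case False
    obtain t where t: "t \<in> S" "b \<bullet> t > 0" using pos_has_pos_simple[OF step.hyps] by blast
    have bR: "b \<in> R" and tR: "t \<in> R" using step.hyps PR t SR by auto
    have bt: "b \<noteq> t" using False t by auto
    have b'R: "b - t \<in> R" using diff_root[OF bR tR t(2) bt] .
    have b'P: "b - t \<in> P"
    proof (rule ccontr)
      assume "b - t \<notin> P"
      then have "\<forall>u\<in>S. coord (b - t) u \<le> 0" using root_sign[OF b'R] b'R by (auto simp: pos_iff)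
      then have "\<forall>u\<in>S. u \<noteq> t \<longrightarrow> coord b u = 0"
        using step.hyps t by (force simp: pos_iff coord_diff coord_basis)
      then show False using root_on_simple[OF bR t(1)] bt not_both[OF S_pos[OF t(1)]] step.hyps
        by auto
    qed
    have "height (b - t) \<le> height b - 1" using t by (simp add: height_diff height_simple)
    then have "supported X (b - t) \<or> supported (S - X) (b - t)" using step.IH b'P by blast
    then show ?thesis
      using supported_add_simple[OF X orth b'P _ t(1)] supported_add_simple[OF _ orth' b'P _ t(1)]
        bR by auto
  qed
qed

lemma simple_roots_connected:
  assumes irr: "irreducible_rs R" and X: "X \<subseteq> S" "X \<noteq> {}" "S - X \<noteq> {}"
  shows "\<exists>t\<in>X. \<exists>u\<in>S - X. t \<bullet> u \<noteq> 0"
proof (rule ccontr)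
  assume "\<not> ?thesis"
  then have orth: "\<forall>t\<in>X. \<forall>u\<in>S - X. t \<bullet> u = 0" by auto
  define R1 where "R1 = {b \<in> R. supported X b}"
  define R2 where "R2 = {b \<in> R. supported (S - X) b}"
  have "R1 \<union> R2 = R"
    using pos_root_supported_part[OF X(1) orth] pos_or_neg supported_neg
    unfolding R1_def R2_def by blast
  moreover have "R1 \<inter> R2 = {}"
    using zero_by_coord nonzero unfolding R1_def R2_def supported_def by blast
  moreover obtain t u where "t \<in> X" "u \<in> S - X" using X by auto
  then have "t \<in> R1" "u \<in> R2" using X(1) SR unfolding R1_def R2_def supported_def
    by (auto simp: coord_basis)
  moreover have "\<forall>a\<in>R1. \<forall>b\<in>R2. a \<bullet> b = 0"
    using supported_orth[OF X(1) orth] unfolding R1_def R2_def by auto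
  ultimately show False using irr unfolding irreducible_rs_def by blast
qed

lemma dominant_pos: assumes b: "b \<in> R" and d: "\<forall>t\<in>S. b \<bullet> t \<ge> 0" shows "b \<in> P"
proof (rule ccontr)
  assume "b \<notin> P"
  then have "(- b) \<bullet> b \<ge> 0" using pos_or_neg b pos_dom_nonneg d by blast
  then have "b = 0" by (simp add: not_less[symmetric])
  then show False using b nonzero by auto
qed

(* In an irreducible root system a dominant root has all coordinates positive:
   a simple root u outside the support would pair negatively with it. *)
lemma dominant_coords_pos:
  assumes irr: "irreducible_rs R" and b: "b \<in> R" and d: "\<forall>t\<in>S. b \<bullet> t \<ge> 0"
  shows "\<forall>s\<in>S. coord b s > 0"
proof (rule ccontr)
  assume nt: "\<not> (\<forall>s\<in>S. coord b s > 0)"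
  have ge: "\<forall>s\<in>S. coord b s \<ge> 0" using dominant_pos[OF b d] by (simp add: pos_iff)
  define X where "X = {s \<in> S. coord b s \<noteq> 0}"
  have "X \<noteq> {}" unfolding X_def using zero_by_coord nonzero[OF b] by blast
  moreover have "S - X \<noteq> {}" unfolding X_def using nt ge by (force simp: order_le_less)
  ultimately obtain t u where t: "t \<in> X" and u: "u \<in> S - X" and tu: "t \<bullet> u \<noteq> 0"
    using simple_roots_connected[OF irr, of X] unfolding X_def by blast
  have tS: "t \<in> S" and uS: "u \<in> S" and cu: "coord b u = 0" and ct: "coord b t > 0"
    using t u ge unfolding X_def by (auto simp: order_le_less)
  have tun: "t \<bullet> u < 0" using simple_pair[OF tS uS] t u tu unfolding X_def by force
  have terms: "\<forall>s\<in>S - {t}. coord b s * (s \<bullet> u) \<le> 0"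
    using simple_pair[OF _ uS] ge cu by (metis DiffD1 mult_eq_0_iff mult_nonneg_nonpos order_refl)
  have "b \<bullet> u = coord b t * (t \<bullet> u) + (\<Sum>s\<in>S - {t}. coord b s * (s \<bullet> u))"
    using inner_coord[of b u] tS finS by (simp add: sum.remove)
  also have "\<dots> < 0" using terms ct tun
    by (intro add_neg_nonpos) (auto intro!: sum_nonpos simp: mult_pos_neg)
  finally show False using d uS by (meson not_less)
qed

(* Uniqueness of the dominant root of a given length in an irreducible root system:
   two such roots b \<noteq> c form an acute angle, so b - c is a root orthogonal to b + c,
   which is impossible for a root that is positive or negative. *)
lemma dominant_root_unique:
  assumes irr: "irreducible_rs R" and b: "b \<in> R" and db: "\<forall>t\<in>S. b \<bullet> t \<ge> 0"
    and c: "c \<in> R" and dc: "\<forall>t\<in>S. c \<bullet> t \<ge> 0" and n: "b \<bullet> b = c \<bullet> c"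
  shows "b = c"
proof (rule ccontr)
  assume ne: "b \<noteq> c"
  have cb: "\<forall>s\<in>S. coord b s > 0" using dominant_coords_pos[OF irr b db] .
  obtain s where s: "s \<in> S" "s \<bullet> c > 0"
    using pos_has_pos_simple[OF dominant_pos[OF c dc]] by (auto simp: inner_commute)
  have nn: "\<forall>t\<in>S. coord b t * (t \<bullet> c) \<ge> 0" using cb dc by (auto simp: inner_commute less_imp_le)
  have "0 < coord b s * (s \<bullet> c)" using cb s by simp
  also have "\<dots> \<le> b \<bullet> c"
    using member_le_sum[of s S "\<lambda>t. coord b t * (t \<bullet> c)"] s nn finS inner_coord[of b c] by auto
  finally have "b - c \<in> R" using diff_root[OF b c _ ne] by blast
  moreover have "e \<notin> P" if "e = b - c \<or> e = - (b - c)" for e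
  proof
    assume e: "e \<in> P"
    have "e \<bullet> b \<ge> 0" "e \<bullet> c \<ge> 0" using pos_dom_nonneg[OF e] db dc by auto
    moreover have "(b - c) \<bullet> (b + c) = 0" using n
      by (simp add: inner_diff_left inner_add_right inner_commute[of c b])
    then have "e \<bullet> (b + c) = 0" using that by (metis inner_minus_left minus_zero)
    then have "e \<bullet> b + e \<bullet> c = 0" by (simp add: inner_add_right)
    ultimately have "e \<bullet> b = 0" "e \<bullet> c = 0" by linarith+
    moreover have "e \<bullet> e = e \<bullet> b - e \<bullet> c \<or> e \<bullet> e = e \<bullet> c - e \<bullet> b"
      using that by (auto simp: inner_diff_right)
    ultimately have "e = 0" by auto
    then show False using e PR nonzero by auto
  qed
  ultimately show False using pos_or_neg by blast
qed

end

context based_root_system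
begin

(* For a short positive root mu and a simple root t with mu . t < 0 the Cartan integer
   is -1 (it cannot be \<le> -2 unless mu = -t), so r_t mu = mu + t. *)
lemma refl_short_raise:
  assumes m: "\<mu> \<in> P" and t: "t \<in> S" and neg: "\<mu> \<bullet> t < 0" and le: "\<mu> \<bullet> \<mu> \<le> t \<bullet> t"
  shows "refl t \<mu> = \<mu> + t"
proof -
  have tR: "t \<in> R" and mR: "\<mu> \<in> R" using t SR m PR by auto
  have t0: "t \<bullet> t > 0" using nonzero[OF tR] by simp
  define k where "k = 2 * (\<mu> \<bullet> t) / (t \<bullet> t)"
  have neg_k: "k < 0" unfolding k_def using neg t0 by (simp add: divide_neg_pos)
  moreover have "k \<le> -2" if "k \<noteq> -1"
  proof -
    obtain z where z: "k = of_int z"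
      using cartan_int[OF tR mR] unfolding k_def[symmetric] by (auto elim: Ints_cases)
    then have "z < 0" "z \<noteq> -1" using neg_k that by auto
    then have "z \<le> -2" by linarith
    then show ?thesis using z by simp
  qed
  moreover have "\<not> k \<le> -2"
  proof
    assume "k \<le> -2"
    then have "\<mu> \<bullet> t \<le> - (t \<bullet> t)" unfolding k_def using t0 by (simp add: field_simps)
    moreover have "(\<mu> + t) \<bullet> (\<mu> + t) = \<mu> \<bullet> \<mu> + 2 * (\<mu> \<bullet> t) + t \<bullet> t"
      by (simp add: inner_add_left inner_add_right inner_commute)
    ultimately have "(\<mu> + t) \<bullet> (\<mu> + t) \<le> 0" using le by simp
    then have "\<mu> = - t" by (simp add: not_less[symmetric] eq_neg_iff_add_eq_0)
    then show False using m S_pos[OF t] not_both by auto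
  qed
  ultimately have "k = -1" by linarith
  then show ?thesis unfolding refl_def k_def[symmetric] by simp
qed

lemma short_root_raise:
  assumes short: "\<forall>b\<in>R. \<alpha> \<bullet> \<alpha> \<le> b \<bullet> b"
    and m: "\<mu> \<in> P" and n: "\<mu> \<bullet> \<mu> = \<alpha> \<bullet> \<alpha>" and t: "t \<in> S" and neg: "\<mu> \<bullet> t < 0"
  shows "\<mu> + t \<in> P" "(\<mu> + t) \<bullet> (\<mu> + t) = \<alpha> \<bullet> \<alpha>" "height (\<mu> + t) = height \<mu> + 1"
    "mq R S lam \<mu> = monom 1 1 * mq R S lam (\<mu> + t)"
proof -
  have tR: "t \<in> R" using t SR by auto
  have r: "refl t \<mu> = \<mu> + t" using refl_short_raise[OF m t neg] short tR n by auto
  have "\<mu> \<noteq> t" using neg inner_ge_zero[of t] by force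
  then show "\<mu> + t \<in> P" using refl_pos[OF t m] r by simp
  show "(\<mu> + t) \<bullet> (\<mu> + t) = \<alpha> \<bullet> \<alpha>" using refl_inner[OF nonzero[OF tR]] r n by metis
  show "height (\<mu> + t) = height \<mu> + 1" using t by (simp add: height_add height_simple)
  show "mq R S lam \<mu> = monom 1 1 * mq R S lam (\<mu> + t)" using mq_raise[OF t r] .
qed

(* Raising a short positive root repeatedly ends in a dominant short root beta, k steps
   higher, with m(mu) = q^k m(beta).  Heights are bounded by the maximal root height. *)
lemma short_root_ascent:
  assumes short: "\<forall>b\<in>R. \<alpha> \<bullet> \<alpha> \<le> b \<bullet> b" and m: "\<mu> \<in> P" and n: "\<mu> \<bullet> \<mu> = \<alpha> \<bullet> \<alpha>"
  shows "\<exists>\<beta> k. \<beta> \<in> R \<and> (\<forall>t\<in>S. \<beta> \<bullet> t \<ge> 0) \<and> \<beta> \<bullet> \<beta> = \<alpha> \<bullet> \<alpha>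
           \<and> height \<beta> = height \<mu> + real k \<and> mq R S lam \<mu> = monom 1 k * mq R S lam \<beta>"
  using m n
proof (induction "nat \<lceil>Max (height ` R) - height \<mu>\<rceil>" arbitrary: \<mu> rule: less_induct)
  case less
  show ?case
  proof (cases "\<forall>t\<in>S. \<mu> \<bullet> t \<ge> 0")
    case True
    then show ?thesis using less.prems PR by (intro exI[of _ \<mu>] exI[of _ 0]) (auto simp: one_pCons)
  next
    case False
    then obtain t where t: "t \<in> S" "\<mu> \<bullet> t < 0" by (auto simp: not_le)
    note up = short_root_raise[OF short less.prems t]
    have "height (\<mu> + t) \<le> Max (height ` R)" using up(1) PR finR by (intro Max_ge) auto
    then have "nat \<lceil>Max (height ` R) - height (\<mu> + t)\<rceil> < nat \<lceil>Max (height ` R) - height \<mu>\<rceil>"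
      using up(3) by linarith
    then obtain \<beta> k where b: "\<beta> \<in> R" "\<forall>t\<in>S. \<beta> \<bullet> t \<ge> 0" "\<beta> \<bullet> \<beta> = \<alpha> \<bullet> \<alpha>"
      "height \<beta> = height (\<mu> + t) + real k" "mq R S lam (\<mu> + t) = monom 1 k * mq R S lam \<beta>"
      using less.hyps up(1,2) by blast
    have "mq R S lam \<mu> = monom 1 (Suc k) * mq R S lam \<beta>"
      using up(4) b(5) by (simp add: mult.assoc[symmetric] mult_monom)
    then show ?thesis using b up(3) by (intro exI[of _ \<beta>] exI[of _ "Suc k"]) auto
  qed
qed

end

(* The theorem. *)
theorem mainTheorem11:
  fixes R S :: "'a::euclidean_space set" and \<alpha> \<alpha>p lam :: 'a
  assumes "root_system R" and "irreducible_rs R" and "is_base R S"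
    and "\<alpha> \<in> S" and "\<alpha> \<in> short_roots R"
    and "lam \<in> dominant R S" and "lam \<in> root_lattice R"
    and "\<alpha>p \<in> (\<lambda>w. w \<alpha>) ` weyl R" and "\<alpha>p \<in> dominant R S"
  shows "monom 1 1 * mq R S lam \<alpha> = monom 1 (nat (ht S \<alpha>p)) * mq R S lam \<alpha>p
       \<and> mq R S lam 0 - monom 1 (nat (ht S \<alpha>p)) * mq R S lam \<alpha>p = mq R S lam 0 - monom 1 1 * mq R S lam \<alpha>
       \<and> mq R S lam 0 - monom 1 1 * mq R S lam \<alpha> = monom 1 1 * mq R S lam 0 - mq R S lam (- \<alpha>)"
proof -
  interpret based_root_system R S using assms(1,3) by unfold_locales
  have aS: "\<alpha> \<in> S" by fact
  have short: "\<forall>b\<in>R. \<alpha> \<bullet> \<alpha> \<le> b \<bullet> b" using assms(5) unfolding short_roots_def by auto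
  obtain xs where xs: "set xs \<subseteq> S" "\<alpha>p = refl_word xs \<alpha>" using assms(8) weyl_as_word by blast
  have apR: "\<alpha>p \<in> R" using refl_word_root[OF xs(1)] aS SR xs(2) by auto
  have apn: "\<alpha>p \<bullet> \<alpha>p = \<alpha> \<bullet> \<alpha>" using refl_word_inner zero_notin_simple_word[OF xs(1)] xs(2) by simp
  have apd: "\<forall>t\<in>S. \<alpha>p \<bullet> t \<ge> 0" using assms(9) unfolding dominant_def by auto
  (* raising alpha ends at the unique dominant root of its length, i.e. at alpha+ *)
  obtain \<beta> k where b: "\<beta> \<in> R" "\<forall>t\<in>S. \<beta> \<bullet> t \<ge> 0" "\<beta> \<bullet> \<beta> = \<alpha> \<bullet> \<alpha>"
    "height \<beta> = height \<alpha> + real k" "mq R S lam \<alpha> = monom 1 k * mq R S lam \<beta>"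
    using short_root_ascent[OF short S_pos[OF aS]] by blast
  have "\<beta> = \<alpha>p" using dominant_root_unique[OF assms(2) b(1,2) apR apd] b(3) apn by simp
  then have "nat (ht S \<alpha>p) = Suc k" using ht_root[OF apR] b(4) height_simple[OF aS] by simp
  then have c1: "monom 1 1 * mq R S lam \<alpha> = monom 1 (nat (ht S \<alpha>p)) * mq R S lam \<alpha>p"
    using b(5) \<open>\<beta> = \<alpha>p\<close> by (simp add: mult.assoc[symmetric] mult_monom)
  then show ?thesis using mq_zero[OF aS, of lam] by simp
qed

end
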